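(* Let $H=\sum_{\lambda\in E}h_\lambda$ be a local Hamiltonian with finite interaction hypergraph $(V,E)$ and $\beta\in\mathbb R$. Let $G\subset E$ and let $G=G_1\cup\dots\cup G_m$ be its decomposition into connected components (pairwise non-overlapping animals). Define $\eta(G'):=\sum_{w\in G'^\ast:\ G'\subset w}f(w)$ for $G'\subset E$, and $$\rho(G):=e^{-\beta H_{(\bar G)^c}}\prod_{j=1}^m\eta(G_j).$$ Then $$\rho(G)=\sum_{w\in((\partial G)^c)^\ast:\ G\subset w}f(w).$$
   Context: $V$ finite, $\mathcal H=\bigotimes_{x\in V}\mathcal H_x$ finite-dimensional; $H=\sum_{\lambda\in E}h_\lambda$, $h_\lambda$ Hermitian with support $\lambda\subset V$; for $K\subset E$, $H_K=\sum_{\lambda\in K}h_\lambda$. Edges overlap if they intersect; an edge set is connected (an animal) if any two edges are joined by a chain of consecutively intersecting edges within it; connected components are maximal connected subsets. For $G\subset E$: complement $G^c:=E\setminus G$; extension $\bar G:=\{\lambda\in E:\exists\lambda'\in G,\ \lambda\cap\lambda'\neq\emptyset\}$; boundary $\partial G:=\bar G\setminus G$. Words: $K^\ast=\bigcup_{l\ge0}K^l$ for $K\subset E$, $|w|$ the length, $G\subset w$ means every element of $G$ occurs in $w$, $h(w)=h_{w_1}\cdots h_{w_{|w|}}$ (empty word gives $\mathbb 1$), $f(w):=\frac{(-\beta)^{|w|}}{|w|!}h(w)$. All series converge absolutely; the factors $\eta(G_j)$ commute. *)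

theory Defs
  imports "HOL-Analysis.Analysis"
begin

text \<open>Hilbert space: the tensor product of the spaces with orthonormal bases S x (x in V).
  Its orthonormal product basis is the set of configurations PiE V S. Operators are
  represented by their matrices w.r.t. this basis; only entries indexed by configurations matter.\<close>

type_synonym ('v, 'a) op = "('v \<Rightarrow> 'a) \<Rightarrow> ('v \<Rightarrow> 'a) \<Rightarrow> complex"

definition confs :: "'v set \<Rightarrow> ('v \<Rightarrow> 'a set) \<Rightarrow> ('v \<Rightarrow> 'a) set" where
  "confs V S = PiE V S"

definition mmul :: "('v \<Rightarrow> 'a) set \<Rightarrow> ('v,'a) op \<Rightarrow> ('v,'a) op \<Rightarrow> ('v,'a) op" where
  "mmul C A B = (\<lambda>\<sigma> \<tau>. \<Sum>\<rho>\<in>C. A \<sigma> \<rho> * B \<rho> \<tau>)"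

definition mone :: "('v,'a) op" where
  "mone = (\<lambda>\<sigma> \<tau>. if \<sigma> = \<tau> then 1 else 0)"

definition mscale :: "complex \<Rightarrow> ('v,'a) op \<Rightarrow> ('v,'a) op" where
  "mscale c A = (\<lambda>\<sigma> \<tau>. c * A \<sigma> \<tau>)"

fun mprod_list :: "('v \<Rightarrow> 'a) set \<Rightarrow> ('v,'a) op list \<Rightarrow> ('v,'a) op" where
  "mprod_list C [] = mone"
| "mprod_list C (A # As) = mmul C A (mprod_list C As)"

definition mpow :: "('v \<Rightarrow> 'a) set \<Rightarrow> ('v,'a) op \<Rightarrow> nat \<Rightarrow> ('v,'a) op" where
  "mpow C A n = mprod_list C (replicate n A)"

definition mexp :: "('v \<Rightarrow> 'a) set \<Rightarrow> ('v,'a) op \<Rightarrow> ('v,'a) op" where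
  "mexp C A = (\<lambda>\<sigma> \<tau>. \<Sum>n. mpow C A n \<sigma> \<tau> / of_nat (fact n))"

definition hermitian_op :: "('v \<Rightarrow> 'a) set \<Rightarrow> ('v,'a) op \<Rightarrow> bool" where
  "hermitian_op C A \<longleftrightarrow> (\<forall>\<sigma>\<in>C. \<forall>\<tau>\<in>C. A \<sigma> \<tau> = cnj (A \<tau> \<sigma>))"

text \<open>A is supported on lam: A = a \<otimes> 1 with a acting on the factors indexed by lam.\<close>
definition supported_on :: "'v set \<Rightarrow> ('v \<Rightarrow> 'a set) \<Rightarrow> 'v set \<Rightarrow> ('v,'a) op \<Rightarrow> bool" where
  "supported_on V S lam A \<longleftrightarrow>
     (\<exists>a :: ('v \<Rightarrow> 'a) \<Rightarrow> ('v \<Rightarrow> 'a) \<Rightarrow> complex.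
        \<forall>\<sigma>\<in>confs V S. \<forall>\<tau>\<in>confs V S.
          A \<sigma> \<tau> = (if (\<forall>x\<in>V - lam. \<sigma> x = \<tau> x)
                     then a (restrict \<sigma> lam) (restrict \<tau> lam) else 0))"

definition HK :: "('e \<Rightarrow> ('v,'a) op) \<Rightarrow> 'e set \<Rightarrow> ('v,'a) op" where
  "HK h K = (\<lambda>\<sigma> \<tau>. \<Sum>lam\<in>K. h lam \<sigma> \<tau>)"

definition hword :: "('v \<Rightarrow> 'a) set \<Rightarrow> ('e \<Rightarrow> ('v,'a) op) \<Rightarrow> 'e list \<Rightarrow> ('v,'a) op" where
  "hword C h w = mprod_list C (map h w)"

definition fword :: "('v \<Rightarrow> 'a) set \<Rightarrow> real \<Rightarrow> ('e \<Rightarrow> ('v,'a) op) \<Rightarrow> 'e list \<Rightarrow> ('v,'a) op" where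
  "fword C \<beta> h w = mscale (complex_of_real ((-\<beta>) ^ length w / fact (length w))) (hword C h w)"

definition words_cover :: "'e set \<Rightarrow> 'e set \<Rightarrow> 'e list set" where
  "words_cover K G = {w. set w \<subseteq> K \<and> G \<subseteq> set w}"

definition wsum :: "('v \<Rightarrow> 'a) set \<Rightarrow> real \<Rightarrow> ('e \<Rightarrow> ('v,'a) op) \<Rightarrow> 'e list set \<Rightarrow> ('v,'a) op" where
  "wsum C \<beta> h W = (\<lambda>\<sigma> \<tau>. infsum (\<lambda>w. fword C \<beta> h w \<sigma> \<tau>) W)"

definition eta :: "('v \<Rightarrow> 'a) set \<Rightarrow> real \<Rightarrow> ('e \<Rightarrow> ('v,'a) op) \<Rightarrow> 'e set \<Rightarrow> ('v,'a) op" where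
  "eta C \<beta> h G' = wsum C \<beta> h (words_cover G' G')"

definition overlap :: "'v set \<Rightarrow> 'v set \<Rightarrow> bool" where
  "overlap l m \<longleftrightarrow> l \<inter> m \<noteq> {}"

definition edge_connected :: "'v set set \<Rightarrow> bool" where
  "edge_connected K \<longleftrightarrow>
     (\<forall>l\<in>K. \<forall>m\<in>K. (l, m) \<in> ({(a, b). a \<in> K \<and> b \<in> K \<and> overlap a b})\<^sup>*)"

definition components :: "'v set set \<Rightarrow> 'v set set set" where
  "components G = {K. K \<noteq> {} \<and> K \<subseteq> G \<and> edge_connected K \<and>
      (\<forall>K'. K \<subseteq> K' \<and> K' \<subseteq> G \<and> edge_connected K' \<longrightarrow> K' = K)}"

definition extension :: "'v set set \<Rightarrow> 'v set set \<Rightarrow> 'v set set" where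
  "extension E G = {l\<in>E. \<exists>l'\<in>G. l \<inter> l' \<noteq> {}}"

definition boundary :: "'v set set \<Rightarrow> 'v set set \<Rightarrow> 'v set set" where
  "boundary E G = extension E G - G"

end

theory Submission
  imports Defs
begin

text \<open>If the operators of two disjoint edge sets \<open>K\<close> and \<open>L\<close> commute, every word over \<open>K \<union> L\<close> is a
  shuffle of a unique pair of words \<open>u\<close> over \<open>K\<close> and \<open>v\<close> over \<open>L\<close>; all \<open>(|u|+|v| choose |u|)\<close>
  such shuffles give the operator \<open>h(u) h(v)\<close>, and the binomial coefficient turns the weight of
  the shuffle into the product of the weights of \<open>u\<close> and \<open>v\<close>. Hence, by absolute convergence,
  the word series over \<open>K \<union> L\<close> factorises into the two series.
  Operators on disjoint edges commute by locality. Edges of distinct components of \<open>G\<close> are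
  disjoint, and so are the edges of \<open>G\<close> and those outside its extension. Splitting
  \<open>E - \<partial>G\<close> into \<open>G\<close> and the complement of the extension, and \<open>G\<close> into its components,
  gives the claim, because the word series over the complement of the extension with no required
  letters is the exponential of \<open>-\<beta>\<close> times the Hamiltonian there.\<close>

definition op_eq_on :: "('v \<Rightarrow> 'a) set \<Rightarrow> ('v,'a) op \<Rightarrow> ('v,'a) op \<Rightarrow> bool" where
  "op_eq_on C A B \<longleftrightarrow> (\<forall>\<sigma>\<in>C. \<forall>\<tau>\<in>C. A \<sigma> \<tau> = B \<sigma> \<tau>)"

definition commute_on :: "('v \<Rightarrow> 'a) set \<Rightarrow> ('v,'a) op \<Rightarrow> ('v,'a) op \<Rightarrow> bool" where
  "commute_on C A B \<longleftrightarrow> op_eq_on C (mmul C A B) (mmul C B A)"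

lemma op_eq_on_refl [simp]: "op_eq_on C A A"
  by (simp add: op_eq_on_def)

lemma op_eq_on_sym: "op_eq_on C A B \<Longrightarrow> op_eq_on C B A"
  by (simp add: op_eq_on_def)

lemma op_eq_on_trans [trans]: "op_eq_on C A B \<Longrightarrow> op_eq_on C B D \<Longrightarrow> op_eq_on C A D"
  by (simp add: op_eq_on_def)

lemma op_eq_on_eq_trans [trans]: "op_eq_on C A B \<Longrightarrow> B = D \<Longrightarrow> op_eq_on C A D"
  by simp

lemma eq_op_eq_on_trans [trans]: "A = B \<Longrightarrow> op_eq_on C B D \<Longrightarrow> op_eq_on C A D"
  by simp

lemma mmul_op_eq_on_cong:
  "op_eq_on C A A' \<Longrightarrow> op_eq_on C B B' \<Longrightarrow> op_eq_on C (mmul C A B) (mmul C A' B')"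
  unfolding op_eq_on_def mmul_def by auto

lemma mmul_assoc: "finite C \<Longrightarrow> mmul C (mmul C A B) D = mmul C A (mmul C B D)"
  unfolding mmul_def
  by (auto simp: sum_distrib_left sum_distrib_right mult.assoc intro!: ext sum.swap)

lemma mmul_mone_left: "finite C \<Longrightarrow> op_eq_on C (mmul C mone A) A"
  by (simp add: op_eq_on_def mmul_def mone_def of_bool_def[symmetric])

lemma mmul_mone_right: "finite C \<Longrightarrow> op_eq_on C (mmul C A mone) A"
  by (simp add: op_eq_on_def mmul_def mone_def of_bool_def[symmetric])

lemma hword_Nil [simp]: "hword C h [] = mone"
  by (simp add: hword_def)

lemma hword_Cons [simp]: "hword C h (x # w) = mmul C (h x) (hword C h w)"
  by (simp add: hword_def)

lemma commute_on_hword: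
  assumes "finite C" "\<And>y. y \<in> set w \<Longrightarrow> commute_on C X (h y)"
  shows "commute_on C X (hword C h w)"
  using assms(2)
proof (induction w)
  case Nil
  have "op_eq_on C (mmul C X mone) (mmul C mone X)"
    using mmul_mone_left[OF assms(1)] mmul_mone_right[OF assms(1)]
    by (meson op_eq_on_sym op_eq_on_trans)
  then show ?case by (simp add: commute_on_def)
next
  case (Cons y w)
  let ?w = "hword C h w"
  have "mmul C X (mmul C (h y) ?w) = mmul C (mmul C X (h y)) ?w"
    by (simp add: assms(1) mmul_assoc)
  also have "op_eq_on C \<dots> (mmul C (mmul C (h y) X) ?w)"
    using Cons.prems by (simp add: commute_on_def mmul_op_eq_on_cong)
  also have "\<dots> = mmul C (h y) (mmul C X ?w)"
    by (simp add: assms(1) mmul_assoc)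
  also have "op_eq_on C \<dots> (mmul C (h y) (mmul C ?w X))"
    using Cons by (simp add: commute_on_def mmul_op_eq_on_cong)
  also have "\<dots> = mmul C (mmul C (h y) ?w) X"
    by (simp add: assms(1) mmul_assoc)
  finally show ?case by (simp add: commute_on_def)
qed

lemma hword_filter_partition:
  assumes "finite C"
    and "\<And>x y. x \<in> set w \<Longrightarrow> y \<in> set w \<Longrightarrow> P x \<Longrightarrow> \<not> P y \<Longrightarrow> commute_on C (h y) (h x)"
  shows "op_eq_on C (hword C h w)
           (mmul C (hword C h (filter P w)) (hword C h (filter (\<lambda>x. \<not> P x) w)))"
  using assms(2)
proof (induction w)
  case Nil
  then show ?case using mmul_mone_left[OF assms(1)] by (simp add: op_eq_on_sym)
next
  case (Cons x w)
  let ?u = "hword C h (filter P w)" and ?v = "hword C h (filter (\<lambda>x. \<not> P x) w)"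
  have "op_eq_on C (hword C h (x # w)) (mmul C (h x) (mmul C ?u ?v))"
    using Cons by (simp add: mmul_op_eq_on_cong)
  also have "op_eq_on C \<dots> (mmul C (hword C h (filter P (x # w))) (hword C h (filter (\<lambda>x. \<not> P x) (x # w))))"
  proof (cases "P x")
    case True
    then show ?thesis by (simp add: assms(1) mmul_assoc)
  next
    case False
    have "commute_on C (h x) ?u"
      by (rule commute_on_hword[OF assms(1)]) (use Cons.prems False in auto)
    then have "op_eq_on C (mmul C (mmul C (h x) ?u) ?v) (mmul C (mmul C ?u (h x)) ?v)"
      by (simp add: commute_on_def mmul_op_eq_on_cong)
    then show ?thesis using False by (simp add: assms(1) mmul_assoc)
  qed
  finally show ?case .
qed

section \<open>Absolute convergence of word series\<close>

lemma norm_hword_le: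
  assumes "finite C" "\<And>l \<rho> \<rho>'. l \<in> K \<Longrightarrow> \<rho> \<in> C \<Longrightarrow> \<rho>' \<in> C \<Longrightarrow> norm (h l \<rho> \<rho>') \<le> B"
    and "0 \<le> B" "\<sigma> \<in> C" "set w \<subseteq> K"
  shows "norm (hword C h w \<sigma> \<tau>) \<le> (real (card C) * B) ^ length w"
  using assms(4,5)
proof (induction w arbitrary: \<sigma>)
  case Nil
  then show ?case by (simp add: mone_def)
next
  case (Cons x w)
  have "norm (hword C h (x # w) \<sigma> \<tau>) \<le> (\<Sum>\<rho>\<in>C. norm (h x \<sigma> \<rho>) * norm (hword C h w \<rho> \<tau>))"
    unfolding hword_Cons mmul_def by (rule order_trans[OF norm_sum]) (simp add: norm_mult)
  also have "\<dots> \<le> (\<Sum>\<rho>\<in>C. B * (real (card C) * B) ^ length w)"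
    by (intro sum_mono mult_mono) (use Cons assms in auto)
  finally show ?case by simp
qed

lemma norm_fword:
  "norm (fword C \<beta> h w \<sigma> \<tau>) = \<bar>\<beta>\<bar> ^ length w / fact (length w) * norm (hword C h w \<sigma> \<tau>)"
  by (simp add: fword_def mscale_def norm_mult norm_divide norm_power)

lemma summable_on_exp_words:
  fixes a :: real
  assumes "finite K" "0 \<le> a"
  shows "(\<lambda>w. a ^ length w / fact (length w)) summable_on {w. set w \<subseteq> K}"
proof (rule nonneg_bdd_above_summable_on)
  let ?g = "\<lambda>w. a ^ length w / fact (length w)"
  show "bdd_above (sum ?g ` {F. F \<subseteq> {w. set w \<subseteq> K} \<and> finite F})"
  proof (rule bdd_aboveI2)
    fix F assume F: "F \<in> {F. F \<subseteq> {w. set w \<subseteq> K} \<and> finite F}"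
    define N where "N = Suc (Max (insert 0 (length ` F)))"
    define L where "L n = {w. set w \<subseteq> K \<and> length w = n}" for n
    have finite_L: "finite (L n)" for n
      unfolding L_def by (rule finite_lists_length_eq[OF assms(1)])
    have "F \<subseteq> (\<Union>n<N. L n)"
    proof
      fix w assume "w \<in> F"
      with F have "length w < N" by (auto simp: N_def less_Suc_eq_le intro!: Max_ge)
      with F \<open>w \<in> F\<close> show "w \<in> (\<Union>n<N. L n)" by (auto simp: L_def)
    qed
    then have "sum ?g F \<le> sum ?g (\<Union>n<N. L n)"
      by (intro sum_mono2) (use finite_L assms in auto)
    also have "\<dots> = (\<Sum>n<N. sum ?g (L n))"
      by (rule sum.UNION_disjoint) (use finite_L in \<open>auto simp: L_def\<close>)
    also have "\<dots> = (\<Sum>n<N. (real (card K) * a) ^ n / fact n)"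
      by (simp add: L_def card_lists_length_eq[OF assms(1)] power_mult_distrib)
    also have "\<dots> \<le> (\<Sum>n. (real (card K) * a) ^ n / fact n)"
      using summable_exp[of "real (card K) * a"] assms
      by (intro sum_le_suminf) (auto simp: divide_inverse mult.commute)
    finally show "sum ?g F \<le> (\<Sum>n. (real (card K) * a) ^ n / fact n)" .
  qed
qed (use assms in simp)

lemma abs_summable_on_fword:
  assumes "finite C" "finite K" "\<sigma> \<in> C" "W \<subseteq> {w. set w \<subseteq> K}"
  shows "(\<lambda>w. norm (fword C \<beta> h w \<sigma> \<tau>)) summable_on W"
proof -
  define B where "B = Max (insert 0 ((\<lambda>(l, \<rho>, \<rho>'). norm (h l \<rho> \<rho>')) ` (K \<times> C \<times> C)))"
  have B: "norm (h l \<rho> \<rho>') \<le> B" if "l \<in> K" "\<rho> \<in> C" "\<rho>' \<in> C" for l \<rho> \<rho>'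
    unfolding B_def using assms(1,2) that by (intro Max_ge) (auto intro!: image_eqI[of _ _ "(l, \<rho>, \<rho>')"])
  have "0 \<le> B"
    unfolding B_def using assms(1,2) by (intro Max_ge) auto
  define a where "a = \<bar>\<beta>\<bar> * (real (card C) * B)"
  have "(\<lambda>w. norm (fword C \<beta> h w \<sigma> \<tau>)) summable_on {w. set w \<subseteq> K}"
  proof (rule summable_on_comparison_test)
    show "(\<lambda>w. a ^ length w / fact (length w)) summable_on {w. set w \<subseteq> K}"
      by (rule summable_on_exp_words) (use assms(2) \<open>0 \<le> B\<close> in \<open>auto simp: a_def\<close>)
    fix w assume "w \<in> {w. set w \<subseteq> K}"
    then have "norm (hword C h w \<sigma> \<tau>) \<le> (real (card C) * B) ^ length w"
      using norm_hword_le[OF assms(1) B \<open>0 \<le> B\<close> assms(3)] by simp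
    then show "norm (fword C \<beta> h w \<sigma> \<tau>) \<le> a ^ length w / fact (length w)"
      unfolding norm_fword a_def power_mult_distrib by (simp add: divide_right_mono mult_left_mono)
  qed simp
  then show ?thesis
    using assms(4) summable_on_subset_banach by blast
qed

section \<open>The exponential as a word series\<close>

lemma sum_words_length_Suc:
  assumes "finite K"
  shows "(\<Sum>w | set w \<subseteq> K \<and> length w = Suc n. f w)
       = (\<Sum>x\<in>K. \<Sum>w | set w \<subseteq> K \<and> length w = n. f (x # w))"
proof -
  let ?L = "{w. set w \<subseteq> K \<and> length w = n}"
  have "inj_on (\<lambda>(w, x). x # w) (?L \<times> K)"
    by (auto simp: inj_on_def)
  then have "(\<Sum>w | set w \<subseteq> K \<and> length w = Suc n. f w) = (\<Sum>(w, x)\<in>?L \<times> K. f (x # w))"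
    by (simp add: lists_length_Suc_eq sum.reindex case_prod_unfold)
  also have "\<dots> = (\<Sum>x\<in>K. \<Sum>w\<in>?L. f (x # w))"
    by (subst sum.swap) (simp add: sum.cartesian_product)
  finally show ?thesis .
qed

lemma mpow_HK_eq_sum_words:
  assumes "finite K"
  shows "mpow C (mscale c (HK h K)) n \<sigma> \<tau> = c ^ n * (\<Sum>w | set w \<subseteq> K \<and> length w = n. hword C h w \<sigma> \<tau>)"
proof (induction n arbitrary: \<sigma>)
  case 0
  have "{w. set w \<subseteq> K \<and> length w = 0} = {[]}"
    by auto
  then show ?case by (simp add: mpow_def)
next
  case (Suc n)
  let ?L = "{w. set w \<subseteq> K \<and> length w = n}"
  have "mpow C (mscale c (HK h K)) (Suc n) \<sigma> \<tau>
      = (\<Sum>\<rho>\<in>C. c * (\<Sum>x\<in>K. h x \<sigma> \<rho>) * (c ^ n * (\<Sum>w\<in>?L. hword C h w \<rho> \<tau>)))"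
    using Suc.IH by (simp add: mpow_def mmul_def mscale_def HK_def)
  also have "\<dots> = (\<Sum>\<rho>\<in>C. \<Sum>w\<in>?L. \<Sum>x\<in>K. c ^ Suc n * (h x \<sigma> \<rho> * hword C h w \<rho> \<tau>))"
    by (simp add: sum_distrib_left sum_distrib_right mult_ac)
  also have "\<dots> = (\<Sum>x\<in>K. \<Sum>w\<in>?L. \<Sum>\<rho>\<in>C. c ^ Suc n * (h x \<sigma> \<rho> * hword C h w \<rho> \<tau>))"
    by (simp only: sum.swap[of _ _ C]) (rule sum.swap)
  also have "\<dots> = c ^ Suc n * (\<Sum>w | set w \<subseteq> K \<and> length w = Suc n. hword C h w \<sigma> \<tau>)"
    by (simp add: sum_words_length_Suc[OF assms] mmul_def sum_distrib_left)
  finally show ?case .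
qed

lemma sums_words_by_length:
  fixes F :: "'e list \<Rightarrow> 'b::banach"
  assumes "finite K" "F summable_on {w. set w \<subseteq> K}"
  shows "(\<lambda>n. \<Sum>w | set w \<subseteq> K \<and> length w = n. F w) sums infsum F {w. set w \<subseteq> K}"
proof -
  let ?W = "{w. set w \<subseteq> K}" and ?L = "\<lambda>n. {w. set w \<subseteq> K \<and> length w = n}"
  have W: "?W = snd ` Sigma UNIV ?L"
    by (auto simp: image_iff)
  have inj: "inj_on snd (Sigma UNIV ?L)"
    by (auto simp: inj_on_def)
  have summable: "(\<lambda>(n, w). F w) summable_on Sigma UNIV ?L"
    using assms(2) unfolding W summable_on_reindex[OF inj] by (simp add: o_def case_prod_unfold)
  have "((\<lambda>n. infsum F (?L n)) has_sum infsum (\<lambda>n. infsum F (?L n)) UNIV) UNIV"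
    using summable_on_Sigma_banach[OF summable] by (rule has_sum_infsum)
  then have "((\<lambda>n. infsum F (?L n)) has_sum infsum (\<lambda>(n, w). F w) (Sigma UNIV ?L)) UNIV"
    using infsum_Sigma'_banach[OF summable] by simp
  moreover have "infsum (\<lambda>(n, w). F w) (Sigma UNIV ?L) = infsum F ?W"
    unfolding W infsum_reindex[OF inj] by (simp add: o_def case_prod_unfold)
  moreover have "infsum F (?L n) = (\<Sum>w\<in>?L n. F w)" for n
    using finite_lists_length_eq[OF assms(1)] by simp
  ultimately show ?thesis
    by (simp add: has_sum_imp_sums)
qed

lemma wsum_words_eq_mexp:
  assumes "finite C" "finite K" "\<sigma> \<in> C"
  shows "wsum C \<beta> h (words_cover K {}) \<sigma> \<tau> = mexp C (mscale (complex_of_real (-\<beta>)) (HK h K)) \<sigma> \<tau>"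
proof -
  let ?F = "\<lambda>w. fword C \<beta> h w \<sigma> \<tau>"
  have "?F summable_on {w. set w \<subseteq> K}"
    by (rule abs_summable_summable, rule abs_summable_on_fword) (use assms in auto)
  then have "(\<lambda>n. \<Sum>w | set w \<subseteq> K \<and> length w = n. ?F w) sums wsum C \<beta> h (words_cover K {}) \<sigma> \<tau>"
    unfolding wsum_def words_cover_def by (auto dest: sums_words_by_length[OF assms(2)])
  moreover have "(\<Sum>w | set w \<subseteq> K \<and> length w = n. ?F w)
      = mpow C (mscale (complex_of_real (-\<beta>)) (HK h K)) n \<sigma> \<tau> / of_nat (fact n)" for n
    unfolding mpow_HK_eq_sum_words[OF assms(2)] by (simp add: fword_def mscale_def sum_distrib_left sum_divide_distrib)
  ultimately show ?thesis
    unfolding mexp_def by (simp add: sums_iff)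
qed

section \<open>Word series over a union of commuting edge sets\<close>

lemma has_sum_sum:
  fixes f :: "'i \<Rightarrow> 'x \<Rightarrow> 'b::topological_comm_monoid_add"
  assumes "finite I" "\<And>i. i \<in> I \<Longrightarrow> (f i has_sum s i) A"
  shows "((\<lambda>x. \<Sum>i\<in>I. f i x) has_sum (\<Sum>i\<in>I. s i)) A"
  using assms by (induction I rule: finite_induct) (auto intro: has_sum_add)

lemma has_sum_mult_product:
  fixes a :: "'x \<Rightarrow> 'c::{banach, real_normed_div_algebra}" and b :: "'y \<Rightarrow> 'c"
  assumes "(\<lambda>x. norm (a x)) summable_on A" and "(\<lambda>y. norm (b y)) summable_on B"
  shows "((\<lambda>(x, y). a x * b y) has_sum (infsum a A * infsum b B)) (A \<times> B)"
proof -
  have "(\<lambda>(x, y). a x * b y) summable_on (A \<times> B)"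
  proof (rule Infinite_Sum.abs_summable_summable,
      rule Infinite_Sum.abs_summable_on_Sigma_iff[of _ A "\<lambda>_. B", THEN iffD2], intro conjI ballI)
    fix x
    show "(\<lambda>y. norm ((\<lambda>(x, y). a x * b y) (x, y))) summable_on B"
      using summable_on_cmult_right[OF assms(2), of "norm (a x)"] by (simp add: norm_mult)
    show "(\<lambda>x. norm (infsum (\<lambda>y. norm ((\<lambda>(x, y). a x * b y) (x, y))) B)) summable_on A"
      using summable_on_cmult_left[OF assms(1), of "infsum (\<lambda>y. norm (b y)) B"]
      by (simp add: norm_mult infsum_cmult_right' abs_mult abs_of_nonneg infsum_nonneg)
  qed
  moreover have "infsum (\<lambda>(x, y). a x * b y) (A \<times> B) = infsum a A * infsum b B"
    using infsum_Sigma'_banach[OF calculation]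
    by (simp add: infsum_cmult_left' infsum_cmult_right')
  ultimately show ?thesis
    by (metis has_sum_infsum)
qed

lemma filter_shuffles_separated:
  assumes "w \<in> shuffles u v" "\<forall>x\<in>set u. P x" "\<forall>x\<in>set v. \<not> P x"
  shows "filter P w = u \<and> filter (\<lambda>x. \<not> P x) w = v"
  using assms by (induction u v arbitrary: w rule: shuffles.induct) auto

lemma in_shuffles_filter: "w \<in> shuffles (filter P w) (filter (\<lambda>x. \<not> P x) w)"
  by (induction w) (auto intro: Cons_in_shuffles_leftI Cons_in_shuffles_rightI)

lemma bij_betw_shuffles_words_cover:
  assumes "K \<inter> L = {}" "R \<subseteq> K" "T \<subseteq> L"
  shows "bij_betw snd (SIGMA (u, v):words_cover K R \<times> words_cover L T. shuffles u v)
           (words_cover (K \<union> L) (R \<union> T))"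
proof (rule bij_betwI')
  have split: "u = filter (\<lambda>x. x \<in> K) w \<and> v = filter (\<lambda>x. x \<notin> K) w"
    if "u \<in> words_cover K R" "v \<in> words_cover L T" "w \<in> shuffles u v" for u v w
    using filter_shuffles_separated[OF that(3), of "\<lambda>x. x \<in> K"] that(1,2) assms(1)
    by (auto simp: words_cover_def)
  fix p q
  assume "p \<in> (SIGMA (u, v):words_cover K R \<times> words_cover L T. shuffles u v)"
    and "q \<in> (SIGMA (u, v):words_cover K R \<times> words_cover L T. shuffles u v)"
  then show "(snd p = snd q) = (p = q)"
    using split by (cases p, cases q) (auto, metis+)
next
  fix p assume "p \<in> (SIGMA (u, v):words_cover K R \<times> words_cover L T. shuffles u v)"
  then show "snd p \<in> words_cover (K \<union> L) (R \<union> T)"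
    by (auto simp: words_cover_def set_shuffles)
next
  fix w assume w: "w \<in> words_cover (K \<union> L) (R \<union> T)"
  let ?u = "filter (\<lambda>x. x \<in> K) w" and ?v = "filter (\<lambda>x. x \<notin> K) w"
  have "((?u, ?v), w) \<in> (SIGMA (u, v):words_cover K R \<times> words_cover L T. shuffles u v)"
    using w assms in_shuffles_filter[of w "\<lambda>x. x \<in> K"] by (auto simp: words_cover_def)
  then show "\<exists>p\<in>(SIGMA (u, v):words_cover K R \<times> words_cover L T. shuffles u v). w = snd p"
    by force
qed

lemma binomial_mult_exp_coeff:
  fixes x :: "'a::field_char_0"
  shows "of_nat ((k + m) choose k) * (x ^ (k + m) / fact (k + m)) = x ^ k / fact k * (x ^ m / fact m)"
proof -
  have "of_nat ((k + m) choose k) = (fact (k + m) / (fact k * fact m) :: 'a)"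
    using binomial_fact[of k "k + m"] by simp
  then show ?thesis
    by (simp add: power_add field_simps)
qed

lemma mmul_mscale: "mmul C (mscale a A) (mscale b B) = mscale (a * b) (mmul C A B)"
  by (simp add: mmul_def mscale_def sum_distrib_left mult_ac)

lemma sum_fword_shuffles:
  assumes "finite C" "\<sigma> \<in> C" "\<tau> \<in> C" "set u \<inter> set v = {}"
    and "\<And>x y. x \<in> set u \<Longrightarrow> y \<in> set v \<Longrightarrow> commute_on C (h y) (h x)"
  shows "(\<Sum>w\<in>shuffles u v. fword C \<beta> h w \<sigma> \<tau>) = mmul C (fword C \<beta> h u) (fword C \<beta> h v) \<sigma> \<tau>"
proof -
  let ?c = "\<lambda>n. (- complex_of_real \<beta>) ^ n / fact n"
  have "fword C \<beta> h w \<sigma> \<tau> = ?c (length u + length v) * mmul C (hword C h u) (hword C h v) \<sigma> \<tau>"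
    if w: "w \<in> shuffles u v" for w
  proof -
    have "op_eq_on C (hword C h w)
        (mmul C (hword C h (filter (\<lambda>x. x \<in> set u) w)) (hword C h (filter (\<lambda>x. x \<notin> set u) w)))"
      by (rule hword_filter_partition[OF assms(1)]) (use assms(4,5) set_shuffles[OF w] in auto)
    then show ?thesis
      using assms filter_shuffles_disjoint1[OF assms(4) w]
      by (simp add: op_eq_on_def fword_def mscale_def length_shuffles[OF w])
  qed
  then have "(\<Sum>w\<in>shuffles u v. fword C \<beta> h w \<sigma> \<tau>)
      = of_nat ((length u + length v) choose length u) * ?c (length u + length v)
        * mmul C (hword C h u) (hword C h v) \<sigma> \<tau>"
    by (simp add: card_disjoint_shuffles[OF assms(4)])
  also have "\<dots> = ?c (length u) * ?c (length v) * mmul C (hword C h u) (hword C h v) \<sigma> \<tau>"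
    by (simp only: binomial_mult_exp_coeff)
  finally show ?thesis
    unfolding fword_def mmul_mscale by (simp add: mscale_def)
qed

lemma has_sum_mmul_fword:
  assumes "finite C" "finite K" "finite L" "W1 \<subseteq> {w. set w \<subseteq> K}" "W2 \<subseteq> {w. set w \<subseteq> L}"
    and "\<sigma> \<in> C"
  shows "((\<lambda>(u, v). mmul C (fword C \<beta> h u) (fword C \<beta> h v) \<sigma> \<tau>)
           has_sum mmul C (wsum C \<beta> h W1) (wsum C \<beta> h W2) \<sigma> \<tau>) (W1 \<times> W2)"
proof -
  have "((\<lambda>(u, v). fword C \<beta> h u \<sigma> \<rho> * fword C \<beta> h v \<rho> \<tau>)
          has_sum wsum C \<beta> h W1 \<sigma> \<rho> * wsum C \<beta> h W2 \<rho> \<tau>) (W1 \<times> W2)" if "\<rho> \<in> C" for \<rho>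
    unfolding wsum_def
    by (rule has_sum_mult_product; rule abs_summable_on_fword) (use assms that in auto)
  then have "((\<lambda>p. \<Sum>\<rho>\<in>C. (\<lambda>(u, v). fword C \<beta> h u \<sigma> \<rho> * fword C \<beta> h v \<rho> \<tau>) p)
          has_sum (\<Sum>\<rho>\<in>C. wsum C \<beta> h W1 \<sigma> \<rho> * wsum C \<beta> h W2 \<rho> \<tau>)) (W1 \<times> W2)"
    by (rule has_sum_sum[OF assms(1)])
  then show ?thesis
    by (simp add: mmul_def case_prod_unfold)
qed

lemma has_sum_fword_words_cover_Un:
  assumes "finite C" "finite K" "finite L" "\<sigma> \<in> C" "\<tau> \<in> C"
    and "K \<inter> L = {}" "R \<subseteq> K" "T \<subseteq> L"
    and "\<And>x y. x \<in> K \<Longrightarrow> y \<in> L \<Longrightarrow> commute_on C (h y) (h x)"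
  shows "((\<lambda>(u, v). mmul C (fword C \<beta> h u) (fword C \<beta> h v) \<sigma> \<tau>)
           has_sum wsum C \<beta> h (words_cover (K \<union> L) (R \<union> T)) \<sigma> \<tau>)
           (words_cover K R \<times> words_cover L T)"
proof (rule has_sum_SigmaD)
  let ?W = "words_cover (K \<union> L) (R \<union> T)" and ?F = "\<lambda>w. fword C \<beta> h w \<sigma> \<tau>"
  have bij: "bij_betw snd (SIGMA (u, v):words_cover K R \<times> words_cover L T. shuffles u v) ?W"
    using assms(6-8) by (rule bij_betw_shuffles_words_cover)
  have "?F summable_on ?W"
    by (rule abs_summable_summable, rule abs_summable_on_fword[of _ "K \<union> L"])
      (use assms in \<open>auto simp: words_cover_def\<close>)
  then have "(?F has_sum wsum C \<beta> h ?W \<sigma> \<tau>) ?W"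
    unfolding wsum_def by (rule has_sum_infsum)
  then show "((\<lambda>p. ?F (snd p)) has_sum wsum C \<beta> h ?W \<sigma> \<tau>)
      (SIGMA (u, v):words_cover K R \<times> words_cover L T. shuffles u v)"
    using has_sum_reindex_bij_betw[OF bij, where f = ?F] by simp
next
  fix p assume p: "p \<in> words_cover K R \<times> words_cover L T"
  obtain u v where [simp]: "p = (u, v)"
    by (cases p)
  have "(\<Sum>w\<in>shuffles u v. fword C \<beta> h w \<sigma> \<tau>) = mmul C (fword C \<beta> h u) (fword C \<beta> h v) \<sigma> \<tau>"
    by (rule sum_fword_shuffles) (use p assms in \<open>auto simp: words_cover_def intro!: assms(9)\<close>)
  then show "((\<lambda>w. fword C \<beta> h (snd (p, w)) \<sigma> \<tau>) has_sum
      (\<lambda>(u, v). mmul C (fword C \<beta> h u) (fword C \<beta> h v) \<sigma> \<tau>) p) ((\<lambda>(u, v). shuffles u v) p)"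
    by (simp add: has_sum_finiteI)
qed

lemma wsum_words_cover_Un:
  assumes "finite C" "finite K" "finite L" "\<sigma> \<in> C" "\<tau> \<in> C"
    and "K \<inter> L = {}" "R \<subseteq> K" "T \<subseteq> L"
    and "\<And>x y. x \<in> K \<Longrightarrow> y \<in> L \<Longrightarrow> commute_on C (h y) (h x)"
  shows "wsum C \<beta> h (words_cover (K \<union> L) (R \<union> T)) \<sigma> \<tau>
       = mmul C (wsum C \<beta> h (words_cover K R)) (wsum C \<beta> h (words_cover L T)) \<sigma> \<tau>"
proof (rule has_sum_unique)
  show "((\<lambda>(u, v). mmul C (fword C \<beta> h u) (fword C \<beta> h v) \<sigma> \<tau>)
          has_sum wsum C \<beta> h (words_cover (K \<union> L) (R \<union> T)) \<sigma> \<tau>)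
          (words_cover K R \<times> words_cover L T)"
    using assms by (rule has_sum_fword_words_cover_Un)
  show "((\<lambda>(u, v). mmul C (fword C \<beta> h u) (fword C \<beta> h v) \<sigma> \<tau>)
          has_sum mmul C (wsum C \<beta> h (words_cover K R)) (wsum C \<beta> h (words_cover L T)) \<sigma> \<tau>)
          (words_cover K R \<times> words_cover L T)"
    by (rule has_sum_mmul_fword[where K = K and L = L]) (use assms in \<open>auto simp: words_cover_def\<close>)
qed

section \<open>Locality\<close>

lemma finite_confs: "finite V \<Longrightarrow> (\<And>x. x \<in> V \<Longrightarrow> finite (S x)) \<Longrightarrow> finite (confs V S)"
  by (simp add: confs_def finite_PiE)

text \<open>Only the configuration that agrees with \<open>\<tau>\<close> on \<open>l\<close> and with \<open>\<sigma>\<close> elsewhere contributes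
  to the matrix product.\<close>
lemma mmul_supported_disjoint:
  assumes A: "\<forall>\<sigma>\<in>confs V S. \<forall>\<tau>\<in>confs V S.
      A \<sigma> \<tau> = (if \<forall>x\<in>V - l. \<sigma> x = \<tau> x then a (restrict \<sigma> l) (restrict \<tau> l) else 0)"
    and B: "\<forall>\<sigma>\<in>confs V S. \<forall>\<tau>\<in>confs V S.
      B \<sigma> \<tau> = (if \<forall>x\<in>V - m. \<sigma> x = \<tau> x then b (restrict \<sigma> m) (restrict \<tau> m) else 0)"
    and "l \<subseteq> V" "l \<inter> m = {}" "finite (confs V S)" "\<sigma> \<in> confs V S" "\<tau> \<in> confs V S"
  shows "mmul (confs V S) A B \<sigma> \<tau> = (if \<forall>x\<in>V - (l \<union> m). \<sigma> x = \<tau> x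
           then a (restrict \<sigma> l) (restrict \<tau> l) * b (restrict \<sigma> m) (restrict \<tau> m) else 0)"
proof -
  define \<rho>\<^sub>0 where "\<rho>\<^sub>0 x = (if x \<in> l then \<tau> x else \<sigma> x)" for x
  have \<rho>\<^sub>0: "\<rho>\<^sub>0 \<in> confs V S"
    using assms(3,6,7) by (auto simp: confs_def \<rho>\<^sub>0_def PiE_iff extensional_def)
  have zero: "A \<sigma> \<rho> * B \<rho> \<tau> = 0" if "\<rho> \<in> confs V S - {\<rho>\<^sub>0}" for \<rho>
  proof (rule ccontr)
    assume "A \<sigma> \<rho> * B \<rho> \<tau> \<noteq> 0"
    then have "\<forall>x\<in>V - l. \<sigma> x = \<rho> x" "\<forall>x\<in>V - m. \<rho> x = \<tau> x"
      using A B assms(6,7) that by (metis DiffD1 mult_eq_0_iff)+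
    moreover have "\<rho> x = \<sigma> x" if "x \<notin> V" for x
      using \<open>\<rho> \<in> confs V S - {\<rho>\<^sub>0}\<close> assms(6) that by (auto simp: confs_def PiE_iff extensional_def)
    ultimately have "\<rho> = \<rho>\<^sub>0"
      using assms(3,4) by (auto simp: \<rho>\<^sub>0_def fun_eq_iff) (metis DiffI)
    with that show False by simp
  qed
  have "mmul (confs V S) A B \<sigma> \<tau> = A \<sigma> \<rho>\<^sub>0 * B \<rho>\<^sub>0 \<tau>"
    unfolding mmul_def using zero by (simp add: sum.remove[OF assms(5) \<rho>\<^sub>0] sum.neutral)
  moreover have "restrict \<rho>\<^sub>0 l = restrict \<tau> l" "restrict \<rho>\<^sub>0 m = restrict \<sigma> m"
    using assms(4) by (auto simp: \<rho>\<^sub>0_def restrict_def fun_eq_iff)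
  moreover have "(\<forall>x\<in>V - m. \<rho>\<^sub>0 x = \<tau> x) \<longleftrightarrow> (\<forall>x\<in>V - (l \<union> m). \<sigma> x = \<tau> x)"
    by (auto simp: \<rho>\<^sub>0_def)
  ultimately show ?thesis
    using A B assms(6,7) \<rho>\<^sub>0 by (simp add: \<rho>\<^sub>0_def)
qed

lemma supported_on_disjoint_commute:
  assumes "supported_on V S l A" "supported_on V S m B" "l \<subseteq> V" "m \<subseteq> V" "l \<inter> m = {}"
  shows "commute_on (confs V S) A B"
proof (cases "finite (confs V S)")
  case True
  obtain a where a: "\<forall>\<sigma>\<in>confs V S. \<forall>\<tau>\<in>confs V S.
      A \<sigma> \<tau> = (if \<forall>x\<in>V - l. \<sigma> x = \<tau> x then a (restrict \<sigma> l) (restrict \<tau> l) else 0)"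
    using assms(1) unfolding supported_on_def by blast
  obtain b where b: "\<forall>\<sigma>\<in>confs V S. \<forall>\<tau>\<in>confs V S.
      B \<sigma> \<tau> = (if \<forall>x\<in>V - m. \<sigma> x = \<tau> x then b (restrict \<sigma> m) (restrict \<tau> m) else 0)"
    using assms(2) unfolding supported_on_def by blast
  have "m \<inter> l = {}"
    using assms(5) by blast
  then show ?thesis
    using mmul_supported_disjoint[OF a b assms(3,5) True] mmul_supported_disjoint[OF b a assms(4) _ True]
    by (simp add: commute_on_def op_eq_on_def Un_commute mult.commute)
next
  case False
  then show ?thesis by (simp add: commute_on_def op_eq_on_def mmul_def)
qed

section \<open>Connected components\<close>

definition overlap_rel :: "'v set set \<Rightarrow> ('v set \<times> 'v set) set" where
  "overlap_rel K = {(l, m). l \<in> K \<and> m \<in> K \<and> overlap l m}"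

lemma edge_connected_iff: "edge_connected K \<longleftrightarrow> (\<forall>l\<in>K. \<forall>m\<in>K. (l, m) \<in> (overlap_rel K)\<^sup>*)"
  by (simp add: edge_connected_def overlap_rel_def)

lemma overlap_rel_mono: "K \<subseteq> K' \<Longrightarrow> (overlap_rel K)\<^sup>* \<subseteq> (overlap_rel K')\<^sup>*"
  by (rule rtrancl_mono) (auto simp: overlap_rel_def)

lemma sym_rtrancl_overlap_rel: "sym ((overlap_rel K)\<^sup>*)"
  by (rule sym_rtrancl) (auto simp: sym_def overlap_rel_def overlap_def)

lemma edge_connected_Un:
  assumes "edge_connected K" "edge_connected K'" "x \<in> K" "y \<in> K'" "overlap x y"
  shows "edge_connected (K \<union> K')"
proof -
  let ?R = "(overlap_rel (K \<union> K'))\<^sup>*"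
  have "(p, x) \<in> ?R" if "p \<in> K \<union> K'" for p
  proof (cases "p \<in> K")
    case True
    then show ?thesis
      using assms(1,3) overlap_rel_mono[of K "K \<union> K'"] by (auto simp: edge_connected_iff)
  next
    case False
    then have "(p, y) \<in> ?R"
      using that assms(2,4) overlap_rel_mono[of K' "K \<union> K'"] by (auto simp: edge_connected_iff)
    moreover have "(y, x) \<in> ?R"
      using assms(3-5) by (auto simp: overlap_rel_def overlap_def)
    ultimately show ?thesis by (rule rtrancl_trans)
  qed
  then show ?thesis
    unfolding edge_connected_iff
    using sym_rtrancl_overlap_rel[of "K \<union> K'"] by (metis rtrancl_trans symD)
qed

lemma components_subset: "K \<in> components G \<Longrightarrow> K \<subseteq> G"
  by (simp add: components_def)

lemma components_overlap_eq:
  assumes "K \<in> components G" "K' \<in> components G" "x \<in> K" "y \<in> K'" "overlap x y"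
  shows "K = K'"
proof -
  have "edge_connected (K \<union> K')"
    using assms by (intro edge_connected_Un) (auto simp: components_def)
  moreover have "K \<union> K' \<subseteq> G"
    using assms(1,2) by (auto simp: components_def)
  ultimately have "K \<union> K' = K" "K \<union> K' = K'"
    using assms(1,2) unfolding components_def by (simp_all add: Un_upper1 Un_upper2)
  then show ?thesis by simp
qed

text \<open>The component of \<open>l\<close> is the set of edges reachable from \<open>l\<close> inside \<open>G\<close>.\<close>
lemma Union_components: "\<Union>(components G) = G"
proof
  show "\<Union>(components G) \<subseteq> G"
    by (auto simp: components_def)
next
  show "G \<subseteq> \<Union>(components G)"
  proof
    fix l assume "l \<in> G"
    define K where "K = {m \<in> G. (l, m) \<in> (overlap_rel G)\<^sup>*}"
    have path: "(l, m) \<in> (overlap_rel K)\<^sup>*" if "(l, m) \<in> (overlap_rel G)\<^sup>*" for m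
      using that
    proof (induction rule: rtrancl_induct)
      case (step m m')
      then have "(m, m') \<in> overlap_rel K"
        by (auto simp: K_def overlap_rel_def intro: rtrancl_into_rtrancl)
      with step.IH show ?case ..
    qed simp
    have "l \<in> K"
      using \<open>l \<in> G\<close> by (simp add: K_def)
    have "edge_connected K"
      unfolding edge_connected_iff
    proof (intro ballI)
      fix p q assume "p \<in> K" "q \<in> K"
      then have "(p, l) \<in> (overlap_rel K)\<^sup>*" "(l, q) \<in> (overlap_rel K)\<^sup>*"
        using path sym_rtrancl_overlap_rel by (auto simp: K_def dest: symD)
      then show "(p, q) \<in> (overlap_rel K)\<^sup>*" by (rule rtrancl_trans)
    qed
    moreover have "K' = K" if "K \<subseteq> K'" "K' \<subseteq> G" "edge_connected K'" for K'
    proof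
      show "K' \<subseteq> K"
      proof
        fix m assume "m \<in> K'"
        moreover have "l \<in> K'"
          using \<open>l \<in> K\<close> that(1) by blast
        ultimately have "(l, m) \<in> (overlap_rel K')\<^sup>*"
          using that(3) by (simp add: edge_connected_iff)
        then show "m \<in> K"
          using overlap_rel_mono[OF that(2)] that(2) \<open>m \<in> K'\<close> by (auto simp: K_def)
      qed
    qed (use that in simp)
    ultimately have "K \<in> components G"
      using \<open>l \<in> K\<close> by (auto simp: components_def K_def)
    with \<open>l \<in> K\<close> show "l \<in> \<Union>(components G)" by blast
  qed
qed

section \<open>Factorisation over the components\<close>

lemma wsum_words_cover_Union_eq_prod_eta:
  assumes "finite C" "\<And>K. K \<in> set Gs \<Longrightarrow> finite K" "distinct Gs" "pairwise disjnt (set Gs)"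
    and "\<And>K K' x y. K \<in> set Gs \<Longrightarrow> K' \<in> set Gs \<Longrightarrow> K \<noteq> K' \<Longrightarrow> x \<in> K \<Longrightarrow> y \<in> K'
           \<Longrightarrow> commute_on C (h y) (h x)"
  shows "op_eq_on C (wsum C \<beta> h (words_cover (\<Union>(set Gs)) (\<Union>(set Gs))))
           (mprod_list C (map (eta C \<beta> h) Gs))"
  using assms(2-5)
proof (induction Gs)
  case Nil
  then show ?case
    by (simp add: op_eq_on_def wsum_def words_cover_def fword_def mscale_def)
next
  case (Cons K Gs)
  let ?U = "\<Union>(set Gs)"
  have "op_eq_on C (wsum C \<beta> h (words_cover (K \<union> ?U) (K \<union> ?U)))
      (mmul C (eta C \<beta> h K) (wsum C \<beta> h (words_cover ?U ?U)))"
    unfolding op_eq_on_def eta_def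
  proof (intro ballI wsum_words_cover_Un)
    show "K \<inter> ?U = {}"
      using Cons.prems(2,3) by (auto simp: pairwise_insert disjnt_def)
    show "commute_on C (h y) (h x)" if "x \<in> K" "y \<in> ?U" for x y
      using Cons.prems(2,4) that by auto
  qed (use assms(1) Cons.prems(1) in auto)
  also have "op_eq_on C (wsum C \<beta> h (words_cover ?U ?U)) (mprod_list C (map (eta C \<beta> h) Gs))"
  proof (rule Cons.IH)
    show "commute_on C (h y) (h x)"
      if "M \<in> set Gs" "M' \<in> set Gs" "M \<noteq> M'" "x \<in> M" "y \<in> M'" for M M' x y
      using Cons.prems(4)[of M M' x y] that by simp
  qed (use Cons.prems in \<open>auto simp: pairwise_insert\<close>)
  then have "op_eq_on C (mmul C (eta C \<beta> h K) (wsum C \<beta> h (words_cover ?U ?U)))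
      (mmul C (eta C \<beta> h K) (mprod_list C (map (eta C \<beta> h) Gs)))"
    by (simp add: mmul_op_eq_on_cong)
  finally show ?case by simp
qed

lemma wsum_words_cover_eq_prod_eta_components:
  assumes "finite C" "finite G" "\<And>l. l \<in> G \<Longrightarrow> l \<noteq> {}"
    and "\<And>x y. x \<in> G \<Longrightarrow> y \<in> G \<Longrightarrow> x \<inter> y = {} \<Longrightarrow> commute_on C (h y) (h x)"
    and "distinct Gs" "set Gs = components G"
  shows "op_eq_on C (wsum C \<beta> h (words_cover G G)) (mprod_list C (map (eta C \<beta> h) Gs))"
proof -
  have disjoint_edges: "x \<inter> y = {}"
    if "K \<in> set Gs" "K' \<in> set Gs" "K \<noteq> K'" "x \<in> K" "y \<in> K'" for K K' x y
    using components_overlap_eq[of K G K' x y] that assms(6) unfolding overlap_def by blast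
  have "op_eq_on C (wsum C \<beta> h (words_cover (\<Union>(set Gs)) (\<Union>(set Gs))))
      (mprod_list C (map (eta C \<beta> h) Gs))"
  proof (rule wsum_words_cover_Union_eq_prod_eta[OF assms(1) _ assms(5)])
    show "finite K" if "K \<in> set Gs" for K
      using components_subset[of K G] that assms(2,6) finite_subset by auto
    show "pairwise disjnt (set Gs)"
      unfolding pairwise_def disjnt_def
    proof (intro ballI impI)
      fix K K' assume KK': "K \<in> set Gs" "K' \<in> set Gs" "K \<noteq> K'"
      have "x = {}" if "x \<in> K \<inter> K'" for x
        using disjoint_edges[OF KK', of x x] that by simp
      then show "K \<inter> K' = {}"
        using components_subset[of K G] KK'(1) assms(3,6) by blast
    qed
    show "commute_on C (h y) (h x)"
      if "K \<in> set Gs" "K' \<in> set Gs" "K \<noteq> K'" "x \<in> K" "y \<in> K'" for K K' x y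
      using disjoint_edges[OF that] components_subset[of _ G] that assms(6)
      by (intro assms(4)) auto
  qed
  then show ?thesis
    by (simp add: assms(6) Union_components)
qed

lemma wsum_words_cover_exterior:
  assumes "finite C" "finite E" "G \<subseteq> E" "\<And>l. l \<in> G \<Longrightarrow> l \<noteq> {}"
    and "\<And>x y. x \<in> E \<Longrightarrow> y \<in> E \<Longrightarrow> x \<inter> y = {} \<Longrightarrow> commute_on C (h y) (h x)"
    and "\<sigma> \<in> C" "\<tau> \<in> C"
  shows "wsum C \<beta> h (words_cover (E - boundary E G) G) \<sigma> \<tau>
       = mmul C (wsum C \<beta> h (words_cover (E - extension E G) {})) (wsum C \<beta> h (words_cover G G)) \<sigma> \<tau>"
proof -
  have G: "G \<subseteq> extension E G"
    using assms(3,4) by (force simp: extension_def)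
  then have "E - boundary E G = (E - extension E G) \<union> G"
    using assms(3) by (auto simp: boundary_def)
  moreover have "wsum C \<beta> h (words_cover ((E - extension E G) \<union> G) ({} \<union> G)) \<sigma> \<tau>
      = mmul C (wsum C \<beta> h (words_cover (E - extension E G) {})) (wsum C \<beta> h (words_cover G G)) \<sigma> \<tau>"
  proof (rule wsum_words_cover_Un[OF assms(1) _ _ assms(6,7)])
    show "finite (E - extension E G)" "finite G"
      using assms(2,3) finite_subset by auto
    show "(E - extension E G) \<inter> G = {}"
      using G by blast
    show "commute_on C (h y) (h x)" if "x \<in> E - extension E G" "y \<in> G" for x y
      using that assms(3) by (intro assms(5)) (auto simp: extension_def)
  qed auto
  ultimately show ?thesis by simp
qed

theorem lemma6:
  fixes V :: "'v set" and S :: "'v \<Rightarrow> 'a set" and E :: "'v set set"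
    and h :: "'v set \<Rightarrow> ('v, 'a) op" and \<beta> :: real
    and G :: "'v set set" and Gs :: "'v set set list"
  assumes "finite V"
    and "\<And>x. x \<in> V \<Longrightarrow> finite (S x) \<and> S x \<noteq> {}"
    and "finite E"
    and "\<And>l. l \<in> E \<Longrightarrow> l \<subseteq> V \<and> l \<noteq> {}"
    and "\<And>l. l \<in> E \<Longrightarrow> hermitian_op (confs V S) (h l)"
    and "\<And>l. l \<in> E \<Longrightarrow> supported_on V S l (h l)"
    and "G \<subseteq> E"
    and "distinct Gs" and "set Gs = components G"
  shows "\<forall>\<sigma>\<in>confs V S. \<forall>\<tau>\<in>confs V S.
           mmul (confs V S)
             (mexp (confs V S) (mscale (complex_of_real (-\<beta>)) (HK h (E - extension E G))))
             (mprod_list (confs V S) (map (eta (confs V S) \<beta> h) Gs)) \<sigma> \<tau>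
         = wsum (confs V S) \<beta> h (words_cover (E - boundary E G) G) \<sigma> \<tau>"
proof -
  let ?C = "confs V S" and ?K = "E - extension E G"
  have C: "finite ?C"
    using assms(1,2) by (simp add: finite_confs)
  have commute: "commute_on ?C (h y) (h x)" if "x \<in> E" "y \<in> E" "x \<inter> y = {}" for x y
    using assms(4,6) that by (intro supported_on_disjoint_commute[where l = y and m = x]) auto
  have "op_eq_on ?C (wsum ?C \<beta> h (words_cover ?K {})) (mexp ?C (mscale (complex_of_real (-\<beta>)) (HK h ?K)))"
    unfolding op_eq_on_def by (intro ballI wsum_words_eq_mexp C) (use assms(3) in auto)
  moreover have "op_eq_on ?C (wsum ?C \<beta> h (words_cover G G)) (mprod_list ?C (map (eta ?C \<beta> h) Gs))"
    using assms(3,4,7-9)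
    by (intro wsum_words_cover_eq_prod_eta_components C) (auto intro: finite_subset commute)
  ultimately have "op_eq_on ?C (mmul ?C (wsum ?C \<beta> h (words_cover ?K {})) (wsum ?C \<beta> h (words_cover G G)))
      (mmul ?C (mexp ?C (mscale (complex_of_real (-\<beta>)) (HK h ?K))) (mprod_list ?C (map (eta ?C \<beta> h) Gs)))"
    by (rule mmul_op_eq_on_cong)
  moreover have "wsum ?C \<beta> h (words_cover (E - boundary E G) G) \<sigma> \<tau>
      = mmul ?C (wsum ?C \<beta> h (words_cover ?K {})) (wsum ?C \<beta> h (words_cover G G)) \<sigma> \<tau>"
    if "\<sigma> \<in> ?C" "\<tau> \<in> ?C" for \<sigma> \<tau>
    by (rule wsum_words_cover_exterior[OF C assms(3,7) _ commute that]) (use assms(4,7) in auto)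
  ultimately show ?thesis
    by (simp add: op_eq_on_def)
qed

end
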